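(* Let $x,y$ be stable g-matchings with $x\prec_F y$. Then there exists a rotation $R\in\mathcal R(x)$ such that $x':=x+\chi^R$ satisfies $x'\preceq_F y$.
   Context: Let $G=(V,E)$ be a finite bipartite graph with color classes $W$ and $F$; the edge joining $w\in W$ and $f\in F$ is written $wf$. Let $b\in\mathbb Z_+^E$ be capacities. For $v\in V$, $E_v$ is the set of edges at $v$, $\mathcal B_v=\{z\in\mathbb Z_+^{E_v}: z\le b|_{E_v}\}$, $\mathbf 1^e$ the unit vector of $e$, $|z|=\sum_e|z(e)|$, $\wedge,\vee$ componentwise min/max. Each $v$ has a choice function $C_v:\mathcal B_v\to\mathcal B_v$ with $C_v(z)\le z$ and, for all $z,z'$: (A1) $z\ge z'\ge C_v(z)\Rightarrow C_v(z')=C_v(z)$; (A2) $z\ge z'\Rightarrow C_v(z)\wedge z'\le C_v(z')$; (A3) $z\ge z'\Rightarrow|C_v(z)|\ge|C_v(z')|$. $z$ is acceptable if $C_v(z)=z$; for distinct acceptable $z,z'$, $z'\prec_v z$ iff $C_v(z\vee z')=z$. $x_v$ = restriction of $x$ to $E_v$. A g-matching is $x\in\mathbb Z_+^E$, $x\le b$, each $x_v$ acceptable; $x\prec_F y$ (distinct) iff $x_f\preceq_f y_f$ for all $f\in F$. $e\in E_v$ is interesting for $v$ under acceptable $z$ if some $z'\in\mathcal B_v$ has $z'(e)>z(e)$, $z'(e')=z(e')$ for $e'\neq e$, $C_v(z')(e)>z(e)$; $e=wf$ blocks a g-matching $x$ if it is interesting for $w$ under $x_w$ and for $f$ under $x_f$;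 a g-matching is stable if no edge blocks it. Rotations: for stable $x$, $U_F^+(x)$ = edges $wf$ interesting for $f$ under $x_f$; $U_F^-(x)$ = edges $wf$ with $x(wf)>0$ not interesting for $f$. Legal $f$-pair: $(a,c)$, $a\in U_F^+(x)\cap E_f$, $c\in E_f\setminus\{a\}$, $C_f(x_f+\mathbf 1^a)=x_f+\mathbf 1^a-\mathbf 1^c$. Legal $w$-pair: $(c,a)$, $c\in U_F^-(x)\cap E_w$, $a\in U_F^+(x)\cap E_w$, $x_w+\mathbf 1^a-\mathbf 1^c$ acceptable; essential if no $d\in (U_F^+(x)\cap E_w)\setminus\{a\}$ is interesting for $w$ under $x_w+\mathbf 1^a-\mathbf 1^c$. Digraph $\mathcal D$: vertices $w^e,f^e$ for $e=wf\in U_F^+(x)\cup U_F^-(x)$, arcs $(w^a,f^a)$ for $a\in U_F^+(x)$, $(f^c,w^c)$ for $c\in U_F^-(x)$, $(f^a,f^c)$ for legal $f$-pairs $(a,c)$, $(w^c,w^a)$ for essential $w$-pairs $(c,a)$. Repeatedly delete vertices with no entering arc; each remaining directed cycle gives a cyclic sequence $(a_1,c_1,\dots,a_k,c_k)$ of distinct edges of $G$, a rotation $R\in\mathcal R(x)$ applicable to $x$, with $\chi^R$ equal to $1$ on $\{a_i\}$, $-1$ on $\{c_i\}$, $0$ elsewhere. *)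

theory Defs
  imports Main
begin

(* Vertices have type 'v; the edge wf is the pair (w,f) with w in W, f in F.
   Vectors indexed by edges are functions ('v * 'v) => nat (resp. int). *)

type_synonym 'v vec = "'v \<times> 'v \<Rightarrow> nat"

definition Ev :: "('v \<times> 'v) set \<Rightarrow> 'v \<Rightarrow> ('v \<times> 'v) set" where
  "Ev E v = {e \<in> E. fst e = v \<or> snd e = v}"

definition Bv :: "('v \<times> 'v) set \<Rightarrow> 'v vec \<Rightarrow> 'v \<Rightarrow> 'v vec set" where
  "Bv E b v = {z. (\<forall>e. e \<notin> Ev E v \<longrightarrow> z e = 0) \<and> (\<forall>e\<in>Ev E v. z e \<le> b e)}"

definition vnorm :: "('v \<times> 'v) set \<Rightarrow> 'v \<Rightarrow> 'v vec \<Rightarrow> nat" where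
  "vnorm E v z = (\<Sum>e\<in>Ev E v. z e)"

definition choice_function ::
  "('v \<times> 'v) set \<Rightarrow> 'v vec \<Rightarrow> 'v \<Rightarrow> ('v vec \<Rightarrow> 'v vec) \<Rightarrow> bool" where
  "choice_function E b v Cv \<longleftrightarrow>
     (\<forall>z\<in>Bv E b v. Cv z \<in> Bv E b v \<and> Cv z \<le> z) \<and>
     (\<forall>z\<in>Bv E b v. \<forall>z'\<in>Bv E b v. z \<ge> z' \<and> z' \<ge> Cv z \<longrightarrow> Cv z' = Cv z) \<and>
     (\<forall>z\<in>Bv E b v. \<forall>z'\<in>Bv E b v. z \<ge> z' \<longrightarrow> inf (Cv z) z' \<le> Cv z') \<and>
     (\<forall>z\<in>Bv E b v. \<forall>z'\<in>Bv E b v. z \<ge> z' \<longrightarrow> vnorm E v (Cv z) \<ge> vnorm E v (Cv z'))"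

definition setting ::
  "'v set \<Rightarrow> 'v set \<Rightarrow> ('v \<times> 'v) set \<Rightarrow> 'v vec \<Rightarrow> ('v \<Rightarrow> 'v vec \<Rightarrow> 'v vec) \<Rightarrow> bool" where
  "setting W F E b C \<longleftrightarrow> finite W \<and> finite F \<and> W \<inter> F = {} \<and> E \<subseteq> W \<times> F \<and>
     (\<forall>v\<in>W \<union> F. choice_function E b v (C v))"

definition restr :: "('v \<times> 'v) set \<Rightarrow> 'v \<Rightarrow> 'v vec \<Rightarrow> 'v vec" where
  "restr E v x = (\<lambda>e. if e \<in> Ev E v then x e else 0)"

definition unitv :: "'v \<times> 'v \<Rightarrow> 'v vec" where
  "unitv a = (\<lambda>e. if e = a then 1 else 0)"

definition acceptable ::
  "('v \<times> 'v) set \<Rightarrow> 'v vec \<Rightarrow> ('v \<Rightarrow> 'v vec \<Rightarrow> 'v vec) \<Rightarrow> 'v \<Rightarrow> 'v vec \<Rightarrow> bool" where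
  "acceptable E b C v z \<longleftrightarrow> z \<in> Bv E b v \<and> C v z = z"

text \<open>prefers E b C v z' z  means  z' \<prec>_v z.\<close>
definition prefers ::
  "('v \<times> 'v) set \<Rightarrow> 'v vec \<Rightarrow> ('v \<Rightarrow> 'v vec \<Rightarrow> 'v vec) \<Rightarrow> 'v \<Rightarrow> 'v vec \<Rightarrow> 'v vec \<Rightarrow> bool" where
  "prefers E b C v z' z \<longleftrightarrow> acceptable E b C v z \<and> acceptable E b C v z' \<and> z \<noteq> z' \<and>
     C v (sup z z') = z"

definition prefers_eq ::
  "('v \<times> 'v) set \<Rightarrow> 'v vec \<Rightarrow> ('v \<Rightarrow> 'v vec \<Rightarrow> 'v vec) \<Rightarrow> 'v \<Rightarrow> 'v vec \<Rightarrow> 'v vec \<Rightarrow> bool" where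
  "prefers_eq E b C v z' z \<longleftrightarrow> z' = z \<or> prefers E b C v z' z"

definition gmatching ::
  "'v set \<Rightarrow> 'v set \<Rightarrow> ('v \<times> 'v) set \<Rightarrow> 'v vec \<Rightarrow> ('v \<Rightarrow> 'v vec \<Rightarrow> 'v vec) \<Rightarrow> 'v vec \<Rightarrow> bool" where
  "gmatching W F E b C x \<longleftrightarrow> (\<forall>e. e \<notin> E \<longrightarrow> x e = 0) \<and> (\<forall>e\<in>E. x e \<le> b e) \<and>
     (\<forall>v\<in>W \<union> F. acceptable E b C v (restr E v x))"

definition precF ::
  "'v set \<Rightarrow> ('v \<times> 'v) set \<Rightarrow> 'v vec \<Rightarrow> ('v \<Rightarrow> 'v vec \<Rightarrow> 'v vec) \<Rightarrow> 'v vec \<Rightarrow> 'v vec \<Rightarrow> bool" where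
  "precF F E b C x y \<longleftrightarrow> x \<noteq> y \<and> (\<forall>f\<in>F. prefers_eq E b C f (restr E f x) (restr E f y))"

definition preceqF ::
  "'v set \<Rightarrow> ('v \<times> 'v) set \<Rightarrow> 'v vec \<Rightarrow> ('v \<Rightarrow> 'v vec \<Rightarrow> 'v vec) \<Rightarrow> 'v vec \<Rightarrow> 'v vec \<Rightarrow> bool" where
  "preceqF F E b C x y \<longleftrightarrow> x = y \<or> precF F E b C x y"

definition interesting ::
  "('v \<times> 'v) set \<Rightarrow> 'v vec \<Rightarrow> ('v \<Rightarrow> 'v vec \<Rightarrow> 'v vec) \<Rightarrow> 'v \<Rightarrow> 'v vec \<Rightarrow> 'v \<times> 'v \<Rightarrow> bool" where
  "interesting E b C v z e \<longleftrightarrow> e \<in> Ev E v \<and>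
     (\<exists>z'\<in>Bv E b v. z' e > z e \<and> (\<forall>e'. e' \<noteq> e \<longrightarrow> z' e' = z e') \<and> C v z' e > z e)"

definition blocks ::
  "('v \<times> 'v) set \<Rightarrow> 'v vec \<Rightarrow> ('v \<Rightarrow> 'v vec \<Rightarrow> 'v vec) \<Rightarrow> 'v vec \<Rightarrow> 'v \<times> 'v \<Rightarrow> bool" where
  "blocks E b C x e \<longleftrightarrow> e \<in> E \<and> interesting E b C (fst e) (restr E (fst e) x) e \<and>
     interesting E b C (snd e) (restr E (snd e) x) e"

definition stable ::
  "'v set \<Rightarrow> 'v set \<Rightarrow> ('v \<times> 'v) set \<Rightarrow> 'v vec \<Rightarrow> ('v \<Rightarrow> 'v vec \<Rightarrow> 'v vec) \<Rightarrow> 'v vec \<Rightarrow> bool" where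
  "stable W F E b C x \<longleftrightarrow> gmatching W F E b C x \<and> (\<forall>e. \<not> blocks E b C x e)"

definition UFplus ::
  "('v \<times> 'v) set \<Rightarrow> 'v vec \<Rightarrow> ('v \<Rightarrow> 'v vec \<Rightarrow> 'v vec) \<Rightarrow> 'v vec \<Rightarrow> ('v \<times> 'v) set" where
  "UFplus E b C x = {e \<in> E. interesting E b C (snd e) (restr E (snd e) x) e}"

definition UFminus ::
  "('v \<times> 'v) set \<Rightarrow> 'v vec \<Rightarrow> ('v \<Rightarrow> 'v vec \<Rightarrow> 'v vec) \<Rightarrow> 'v vec \<Rightarrow> ('v \<times> 'v) set" where
  "UFminus E b C x = {e \<in> E. x e > 0 \<and> \<not> interesting E b C (snd e) (restr E (snd e) x) e}"

text \<open>Legal f-pair (a,c) with f = snd a: C_f(x_f + 1^a) = x_f + 1^a - 1^c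
  (written additively to avoid truncated subtraction).\<close>
definition legal_fpair ::
  "('v \<times> 'v) set \<Rightarrow> 'v vec \<Rightarrow> ('v \<Rightarrow> 'v vec \<Rightarrow> 'v vec) \<Rightarrow> 'v vec \<Rightarrow> 'v \<times> 'v \<Rightarrow> 'v \<times> 'v \<Rightarrow> bool" where
  "legal_fpair E b C x a c \<longleftrightarrow> a \<in> UFplus E b C x \<and> c \<in> Ev E (snd a) \<and> c \<noteq> a \<and>
     (\<lambda>e. C (snd a) (\<lambda>e'. restr E (snd a) x e' + unitv a e') e + unitv c e)
       = (\<lambda>e. restr E (snd a) x e + unitv a e)"

text \<open>Legal w-pair (c,a) with w = fst c = fst a (x(c) > 0 as c is in U_F^-).\<close>
definition legal_wpair ::
  "('v \<times> 'v) set \<Rightarrow> 'v vec \<Rightarrow> ('v \<Rightarrow> 'v vec \<Rightarrow> 'v vec) \<Rightarrow> 'v vec \<Rightarrow> 'v \<times> 'v \<Rightarrow> 'v \<times> 'v \<Rightarrow> bool" where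
  "legal_wpair E b C x c a \<longleftrightarrow> c \<in> UFminus E b C x \<and> a \<in> UFplus E b C x \<and> fst c = fst a \<and>
     acceptable E b C (fst a) (\<lambda>e. restr E (fst a) x e + unitv a e - unitv c e)"

definition essential_wpair ::
  "('v \<times> 'v) set \<Rightarrow> 'v vec \<Rightarrow> ('v \<Rightarrow> 'v vec \<Rightarrow> 'v vec) \<Rightarrow> 'v vec \<Rightarrow> 'v \<times> 'v \<Rightarrow> 'v \<times> 'v \<Rightarrow> bool" where
  "essential_wpair E b C x c a \<longleftrightarrow> legal_wpair E b C x c a \<and>
     \<not> (\<exists>d \<in> (UFplus E b C x \<inter> Ev E (fst a)) - {a}.
          interesting E b C (fst a) (\<lambda>e. restr E (fst a) x e + unitv a e - unitv c e) d)"

datatype 'e dnode = Wn 'e | Fn 'e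

definition Dverts ::
  "('v \<times> 'v) set \<Rightarrow> 'v vec \<Rightarrow> ('v \<Rightarrow> 'v vec \<Rightarrow> 'v vec) \<Rightarrow> 'v vec \<Rightarrow> ('v \<times> 'v) dnode set" where
  "Dverts E b C x = Wn ` (UFplus E b C x \<union> UFminus E b C x) \<union> Fn ` (UFplus E b C x \<union> UFminus E b C x)"

definition Darcs ::
  "('v \<times> 'v) set \<Rightarrow> 'v vec \<Rightarrow> ('v \<Rightarrow> 'v vec \<Rightarrow> 'v vec) \<Rightarrow> 'v vec \<Rightarrow>
   (('v \<times> 'v) dnode \<times> ('v \<times> 'v) dnode) set" where
  "Darcs E b C x = ({(Wn a, Fn a) | a. a \<in> UFplus E b C x}
     \<union> {(Fn c, Wn c) | c. c \<in> UFminus E b C x}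
     \<union> {(Fn a, Fn c) | a c. legal_fpair E b C x a c}
     \<union> {(Wn c, Wn a) | c a. essential_wpair E b C x c a})
     \<inter> (Dverts E b C x \<times> Dverts E b C x)"

definition del_step :: "('n \<times> 'n) set \<Rightarrow> 'n set \<Rightarrow> 'n set" where
  "del_step A S = {v \<in> S. \<exists>u\<in>S. (u, v) \<in> A}"

text \<open>Repeated deletion; card(vertex set) rounds suffice to reach the fixed point.\<close>
definition remaining ::
  "('v \<times> 'v) set \<Rightarrow> 'v vec \<Rightarrow> ('v \<Rightarrow> 'v vec \<Rightarrow> 'v vec) \<Rightarrow> 'v vec \<Rightarrow> ('v \<times> 'v) dnode set" where
  "remaining E b C x = (del_step (Darcs E b C x) ^^ card (Dverts E b C x)) (Dverts E b C x)"

definition dir_cycle :: "('n \<times> 'n) set \<Rightarrow> 'n set \<Rightarrow> 'n list \<Rightarrow> bool" where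
  "dir_cycle A S vs \<longleftrightarrow> vs \<noteq> [] \<and> distinct vs \<and> set vs \<subseteq> S \<and>
     (\<forall>i<length vs. (vs ! i, vs ! ((i + 1) mod length vs)) \<in> A)"

text \<open>A rotation is represented by the list [(a_1,c_1),...,(a_k,c_k)]; its directed cycle in
  the remaining digraph is w^{a_1} f^{a_1} f^{c_1} w^{c_1} w^{a_2} ... w^{c_k} (back to w^{a_1}).\<close>
definition cycle_nodes :: "(('v \<times> 'v) \<times> ('v \<times> 'v)) list \<Rightarrow> ('v \<times> 'v) dnode list" where
  "cycle_nodes R = concat (map (\<lambda>(a, c). [Wn a, Fn a, Fn c, Wn c]) R)"

definition rotations ::
  "('v \<times> 'v) set \<Rightarrow> 'v vec \<Rightarrow> ('v \<Rightarrow> 'v vec \<Rightarrow> 'v vec) \<Rightarrow> 'v vec \<Rightarrow>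
   (('v \<times> 'v) \<times> ('v \<times> 'v)) list set" where
  "rotations E b C x = {R. R \<noteq> [] \<and> distinct (concat (map (\<lambda>(a, c). [a, c]) R)) \<and>
     dir_cycle (Darcs E b C x) (remaining E b C x) (cycle_nodes R)}"

definition chi :: "(('v \<times> 'v) \<times> ('v \<times> 'v)) list \<Rightarrow> 'v \<times> 'v \<Rightarrow> int" where
  "chi R e = (if e \<in> fst ` set R then 1 else if e \<in> snd ` set R then -1 else 0)"

end

theory Submission
  imports Defs "HOL-Combinatorics.Orbits"
begin

text \<open>
  For stable g-matchings with x before y every vertex has the same size in x and in y: the firms'
  inequalities |x_f| \<le> |y_f| and the workers' inequalities |y_w| \<le> |x_w| add up to equalities
  (w still chooses x_w when all edges of U_F^+(x) at w are offered up to capacity, since by stability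
  none of them is interesting for w). Call a \<in> U_F^+(x) a candidate if one more unit of a does not
  push its firm beyond y. Offered x_f + 1^a, a firm f then rejects exactly one unit of some
  c \<in> U_F^-(x) with y(c) < x(c), by size monotonicity; and the worker of c, offered x_w - 1^c with
  U_F^+(x) at capacity, accepts one unit of a new candidate. These are a legal f-pair and an
  essential w-pair, so following them from candidate to candidate closes a directed cycle of the
  rotation digraph, which survives the deletion of vertices without entering arcs. At every firm,
  the choice from x_f plus the heads of the cycle is exactly x_f + \<chi>^R, and the choice from that
  offer joined with y_f is still y_f; hence x + \<chi>^R precedes or equals y.
\<close>

declare split_paired_All [simp del] split_paired_Ex [simp del]

section \<open>Bounded vectors and choice functions\<close>

lemma Bv_zero: "z \<in> Bv E b v \<Longrightarrow> e \<notin> Ev E v \<Longrightarrow> z e = 0"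
  unfolding Bv_def by blast

lemma Bv_le: "z \<in> Bv E b v \<Longrightarrow> e \<in> Ev E v \<Longrightarrow> z e \<le> b e"
  by (simp add: Bv_def)

lemma Bv_mono:
  assumes z: "z \<in> Bv E b v" and le: "z' \<le> z"
  shows "z' \<in> Bv E b v"
  unfolding Bv_def
proof (intro CollectI conjI allI impI ballI)
  fix e
  show "e \<notin> Ev E v \<Longrightarrow> z' e = 0" using le_funD[OF le, of e] Bv_zero[OF z] by simp
  show "e \<in> Ev E v \<Longrightarrow> z' e \<le> b e" using le_funD[OF le, of e] Bv_le[OF z] by (meson order_trans)
qed

lemma Bv_sup: "z \<in> Bv E b v \<Longrightarrow> z' \<in> Bv E b v \<Longrightarrow> sup z z' \<in> Bv E b v"
  by (simp add: Bv_def)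

lemma Bv_upd: "z \<in> Bv E b v \<Longrightarrow> e \<in> Ev E v \<Longrightarrow> k \<le> b e \<Longrightarrow> z(e := k) \<in> Bv E b v"
  by (simp add: Bv_def)

lemma vnorm_mono: "(\<And>e. e \<in> Ev E v \<Longrightarrow> g e \<le> h e) \<Longrightarrow> vnorm E v g \<le> vnorm E v h"
  unfolding vnorm_def by (rule sum_mono)

lemma vnorm_upd_Suc:
  assumes "finite (Ev E v)" "a \<in> Ev E v"
  shows "vnorm E v (z(a := z a + 1)) = vnorm E v z + 1"
proof -
  have "z(a := z a + 1) = (\<lambda>e. z e + of_bool (e = a))" by auto
  moreover have "Ev E v \<inter> {e. e = a} = {a}" using assms(2) by blast
  ultimately show ?thesis using assms(1) by (simp add: vnorm_def sum.distrib)
qed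

lemma Bv_eq_if_le_vnorm:
  assumes "finite (Ev E v)" "g \<in> Bv E b v" "h \<in> Bv E b v" "g \<le> h" "vnorm E v h \<le> vnorm E v g"
  shows "g = h"
proof
  fix e
  show "g e = h e"
  proof (cases "e \<in> Ev E v")
    case True
    have "vnorm E v g \<le> vnorm E v h" by (rule vnorm_mono) (rule le_funD[OF assms(4)])
    then have "sum g (Ev E v) = sum h (Ev E v)" using assms(5) by (simp add: vnorm_def)
    then show ?thesis by (rule sum_mono_inv[OF _ _ True assms(1)]) (rule le_funD[OF assms(4)])
  next
    case False
    then show ?thesis using assms(2,3) by (simp add: Bv_zero)
  qed
qed

lemma upd_Suc_if_vnorm_Suc:
  assumes fin: "finite (Ev E v)" and g: "g \<in> Bv E b v" and h: "h \<in> Bv E b v" and "g \<le> h"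
    and size: "vnorm E v h = vnorm E v g + 1"
  obtains c where "c \<in> Ev E v" "h = g(c := g c + 1)"
proof -
  have "g \<noteq> h" using size by auto
  then obtain c where "g c \<noteq> h c" by (meson ext)
  then have less: "g c < h c" using le_funD[OF \<open>g \<le> h\<close>, of c] by simp
  then have c: "c \<in> Ev E v" using h by (metis Bv_zero not_less_zero)
  have le: "g(c := g c + 1) \<le> h" using le_funD[OF \<open>g \<le> h\<close>] less by (simp add: le_funI)
  have "g(c := g c + 1) = h"
    using Bv_eq_if_le_vnorm[OF fin Bv_mono[OF h le] h le] vnorm_upd_Suc[OF fin c] size by simp
  with c that show ?thesis by simp
qed

lemma interesting_room: "interesting E b C v z e \<Longrightarrow> z e < b e"
  unfolding interesting_def by (meson Bv_le less_le_trans)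

locale choice_vertex =
  fixes E :: "('v \<times> 'v) set" and b :: "'v vec" and C :: "'v \<Rightarrow> 'v vec \<Rightarrow> 'v vec" and v :: 'v
  assumes choice: "choice_function E b v (C v)"
begin

lemma choice_in_Bv: "z \<in> Bv E b v \<Longrightarrow> C v z \<in> Bv E b v"
  using choice unfolding choice_function_def by blast

lemma choice_le: "z \<in> Bv E b v \<Longrightarrow> C v z \<le> z"
  using choice unfolding choice_function_def by blast

lemma choice_consistent:
  "z \<in> Bv E b v \<Longrightarrow> z' \<in> Bv E b v \<Longrightarrow> z' \<le> z \<Longrightarrow> C v z \<le> z' \<Longrightarrow> C v z' = C v z"
  using choice unfolding choice_function_def by blast

lemma choice_substitutable:
  "z \<in> Bv E b v \<Longrightarrow> z' \<in> Bv E b v \<Longrightarrow> z' \<le> z \<Longrightarrow> min (C v z e) (z' e) \<le> C v z' e"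
  using choice unfolding choice_function_def by (metis inf_apply inf_nat_def le_funD)

lemma choice_size_mono:
  "z \<in> Bv E b v \<Longrightarrow> z' \<in> Bv E b v \<Longrightarrow> z' \<le> z \<Longrightarrow> vnorm E v (C v z') \<le> vnorm E v (C v z)"
  using choice unfolding choice_function_def by blast

lemma choice_idem: "z \<in> Bv E b v \<Longrightarrow> C v (C v z) = C v z"
  using choice_consistent choice_in_Bv choice_le order_refl by metis

lemma interesting_if_chosen_above:
  assumes z: "z \<in> Bv E b v" and u: "u \<in> Bv E b v" and "z \<le> u" "e \<in> Ev E v" "z e < C v u e"
  shows "interesting E b C v z e"
proof -
  let ?z' = "z(e := C v u e)"
  have le: "?z' \<le> u" using le_funD[OF \<open>z \<le> u\<close>] le_funD[OF choice_le[OF u]] by (simp add: le_funI)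
  have "min (C v u e) (?z' e) \<le> C v ?z' e"
    by (rule choice_substitutable[OF u Bv_mono[OF u le] le])
  then show ?thesis
    unfolding interesting_def using assms Bv_mono[OF u le] by (intro conjI bexI[of _ ?z']) auto
qed

lemma interesting_bump:
  assumes z: "z \<in> Bv E b v" and int: "interesting E b C v z e"
  shows "C v (z(e := z e + 1)) e = z e + 1"
proof -
  let ?h = "z(e := z e + 1)"
  have h: "?h \<in> Bv E b v"
    using int interesting_room[OF int] by (intro Bv_upd[OF z]) (auto simp: interesting_def)
  obtain z' where z': "z' \<in> Bv E b v" "z e < z' e" "\<forall>e'. e' \<noteq> e \<longrightarrow> z' e' = z e'" "z e < C v z' e"
    using int unfolding interesting_def by blast
  have "?h \<le> z'" using z' by (intro le_funI) (simp add: Suc_le_eq)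
  then have "min (C v z' e) (?h e) \<le> C v ?h e" by (rule choice_substitutable[OF z'(1) h])
  moreover have "C v ?h e \<le> ?h e" using le_funD[OF choice_le[OF h]] .
  ultimately show ?thesis using z'(4) by simp
qed

lemma not_interesting_at_capacity:
  assumes z: "z \<in> Bv E b v" and full: "b d \<le> z d"
  shows "\<not> interesting E b C v (C v z) d"
proof
  assume "interesting E b C v (C v z) d"
  then obtain z' where z': "z' \<in> Bv E b v" "\<forall>e. e \<noteq> d \<longrightarrow> z' e = C v z e" "C v z d < C v z' d"
    "d \<in> Ev E v" "C v z d < z' d"
    unfolding interesting_def by blast
  have "z' \<le> z"
    using z' full le_funD[OF choice_le[OF z]] Bv_le[OF z'(1) z'(4)] by (metis le_funI order_trans)
  moreover have "C v z \<le> z'" using z' by (metis le_funI order_refl less_imp_le)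
  ultimately have "C v z' = C v z" by (rule choice_consistent[OF z z'(1)])
  with z'(3) show False by simp
qed

lemma choice_sup_rejected:
  assumes h: "h \<in> Bv E b v" and p: "p \<in> Bv E b v" and "0 < h c"
    and rejects: "C v h = h(c := h c - 1)" and p_le: "\<And>e. e \<noteq> c \<Longrightarrow> p e \<le> h e"
  shows "C v (sup h p) = C v h"
proof -
  let ?u = "sup h p"
  have u: "?u \<in> Bv E b v" by (rule Bv_sup[OF h p])
  have "C v ?u \<le> C v h"
  proof (rule le_funI)
    fix e
    have "min (C v ?u e) (h e) \<le> C v h e" by (rule choice_substitutable[OF u h sup_ge1])
    moreover have "C v ?u e \<le> ?u e" using le_funD[OF choice_le[OF u]] .
    moreover have "e \<noteq> c \<Longrightarrow> ?u e = h e" using p_le by (simp add: sup_absorb1)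
    ultimately show "C v ?u e \<le> C v h e"
      using rejects \<open>0 < h c\<close> by (cases "e = c") auto
  qed
  moreover have "C v h \<le> ?u" using choice_le[OF h] sup_ge1 by (rule order_trans)
  ultimately show ?thesis
    using choice_consistent[OF u choice_in_Bv[OF h]] choice_idem[OF h] by simp
qed

lemma rejected_not_interesting:
  assumes fin: "finite (Ev E v)" and z: "z \<in> Bv E b v" and a: "a \<in> Ev E v" "z a < b a"
    and "c \<noteq> a" and "0 < z c"
    and rejects: "C v (z(a := z a + 1)) = (z(a := z a + 1))(c := z c - 1)"
  shows "\<not> interesting E b C v z c"
proof
  assume int: "interesting E b C v z c"
  define h where "h = z(a := z a + 1)"
  define p where "p = z(c := z c + 1)"
  have c: "c \<in> Ev E v" using int by (simp add: interesting_def)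
  have h: "h \<in> Bv E b v" unfolding h_def using a by (intro Bv_upd[OF z]) auto
  have p: "p \<in> Bv E b v"
    unfolding p_def using c interesting_room[OF int] by (intro Bv_upd[OF z]) auto
  have hc: "h c = z c" and zh: "z e \<le> h e" for e using \<open>c \<noteq> a\<close> by (simp_all add: h_def)
  have pc: "p c = z c + 1" and pe: "e \<noteq> c \<Longrightarrow> p e = z e" for e by (simp_all add: p_def)
  have Ch: "C v h = h(c := h c - 1)" using rejects hc by (simp add: h_def)
  have Cu: "C v (sup h p) = C v h"
    by (rule choice_sup_rejected[OF h p _ Ch]) (simp_all add: hc pe zh \<open>0 < z c\<close>)
  have Cpc: "C v p c = z c + 1" using interesting_bump[OF z int] by (simp add: p_def)
  have "p \<le> C v p"
  proof (rule le_funI)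
    fix e
    have "min (C v (sup h p) e) (p e) \<le> C v p e"
      by (rule choice_substitutable[OF Bv_sup[OF h p] p sup_ge2])
    then show "p e \<le> C v p e" using Cpc pc pe zh by (cases "e = c") (auto simp: Cu Ch)
  qed
  then have "vnorm E v p \<le> vnorm E v (C v h)"
    using choice_size_mono[OF Bv_sup[OF h p] p sup_ge2] vnorm_mono[of E v p "C v p"] le_funD
    by (fastforce simp: Cu)
  moreover have "h = (C v h)(c := C v h c + 1)" using Ch hc \<open>0 < z c\<close> by (intro ext) simp
  then have "vnorm E v h = vnorm E v (C v h) + 1" by (metis vnorm_upd_Suc[OF fin c])
  ultimately show False
    using vnorm_upd_Suc[OF fin a(1), of z] vnorm_upd_Suc[OF fin c, of z] by (simp add: h_def p_def)
qed

end

section \<open>Directed cycles of the rotation digraph\<close>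

lemma cycle_nodes_Cons: "cycle_nodes ((a, c) # R) = [Wn a, Fn a, Fn c, Wn c] @ cycle_nodes R"
  by (simp add: cycle_nodes_def)

lemma length_cycle_nodes: "length (cycle_nodes R) = 4 * length R"
  by (induction R) (auto simp: cycle_nodes_def)

lemma nth_cycle_nodes:
  "i < length R \<Longrightarrow> r < 4 \<Longrightarrow> cycle_nodes R ! (4 * i + r) =
     [Wn (fst (R ! i)), Fn (fst (R ! i)), Fn (snd (R ! i)), Wn (snd (R ! i))] ! r"
proof (induction R arbitrary: i)
  case (Cons p R)
  obtain a c where p: "p = (a, c)" by fastforce
  show ?case
  proof (cases i)
    case 0
    have "r = 0 \<or> r = 1 \<or> r = 2 \<or> r = 3" using Cons.prems(2) by linarith
    then show ?thesis using 0 p by (auto simp: cycle_nodes_Cons)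
  next
    case (Suc j)
    then show ?thesis using Cons p by (simp add: cycle_nodes_Cons)
  qed
qed simp

lemma set_concat_pairs: "set (concat (map (\<lambda>(a, c). [a, c]) R)) = fst ` set R \<union> snd ` set R"
  by (induction R) auto

lemma set_cycle_nodes:
  "set (cycle_nodes R) = Wn ` (fst ` set R \<union> snd ` set R) \<union> Fn ` (fst ` set R \<union> snd ` set R)"
proof (induction R)
  case (Cons p R)
  then show ?case by (cases p) (auto simp: cycle_nodes_Cons)
qed (simp add: cycle_nodes_def)

lemma distinct_cycle_nodes:
  "distinct (concat (map (\<lambda>(a, c). [a, c]) R)) \<Longrightarrow> distinct (cycle_nodes R)"
proof (induction R)
  case (Cons p R)
  then show ?case by (cases p) (auto simp: cycle_nodes_Cons set_cycle_nodes set_concat_pairs)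
qed (simp add: cycle_nodes_def)

lemma distinct_concat_pairs:
  "distinct (map fst R) \<Longrightarrow> distinct (map snd R) \<Longrightarrow> fst ` set R \<inter> snd ` set R = {}
    \<Longrightarrow> distinct (concat (map (\<lambda>(a, c). [a, c]) R))"
proof (induction R)
  case (Cons p R)
  obtain a c where p: "p = (a, c)" by fastforce
  have "a \<notin> fst ` set R" "c \<notin> snd ` set R" using Cons.prems(1,2) p by auto
  moreover have "a \<noteq> c" "a \<notin> snd ` set R" "c \<notin> fst ` set R" using Cons.prems(3) p by force+
  ultimately have "a \<notin> set (concat (map (\<lambda>(a, c). [a, c]) R))"
    and "c \<notin> set (concat (map (\<lambda>(a, c). [a, c]) R))" and "a \<noteq> c"
    unfolding set_concat_pairs by blast+
  moreover have "distinct (concat (map (\<lambda>(a, c). [a, c]) R))" using Cons by auto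
  ultimately show ?case using p by simp
qed simp

lemma cycle_nodes_arcs:
  assumes pair_arcs: "\<And>a c. (a, c) \<in> set R \<Longrightarrow> (Wn a, Fn a) \<in> A \<and> (Fn a, Fn c) \<in> A \<and> (Fn c, Wn c) \<in> A"
    and link_arcs: "\<And>i. i < length R \<Longrightarrow> (Wn (snd (R ! i)), Wn (fst (R ! (Suc i mod length R)))) \<in> A"
    and k: "k < length (cycle_nodes R)"
  shows "(cycle_nodes R ! k, cycle_nodes R ! ((k + 1) mod length (cycle_nodes R))) \<in> A"
proof -
  define i r where "i = k div 4" and "r = k mod 4"
  have k_eq: "k = 4 * i + r" and "r < 4" by (simp_all add: i_def r_def)
  have i: "i < length R" using k by (simp add: length_cycle_nodes i_def)
  have arcs: "(Wn (fst (R ! i)), Fn (fst (R ! i))) \<in> A" "(Fn (fst (R ! i)), Fn (snd (R ! i))) \<in> A"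
    "(Fn (snd (R ! i)), Wn (snd (R ! i))) \<in> A"
    "(Wn (snd (R ! i)), Wn (fst (R ! (Suc i mod length R)))) \<in> A"
    using pair_arcs[of "fst (R ! i)" "snd (R ! i)"] link_arcs[OF i] nth_mem[OF i] by simp_all
  let ?block = "\<lambda>r. [Wn (fst (R ! i)), Fn (fst (R ! i)), Fn (snd (R ! i)), Wn (snd (R ! i))] ! r"
  have cur: "cycle_nodes R ! k = ?block r"
    using nth_cycle_nodes[OF i \<open>r < 4\<close>] by (simp add: k_eq)
  consider "r < 3" | "r = 3" using \<open>r < 4\<close> by linarith
  then show ?thesis
  proof cases
    case 1
    have "cycle_nodes R ! (k + 1) = ?block (r + 1)"
      using nth_cycle_nodes[OF i, of "r + 1"] 1 by (simp add: k_eq add.assoc)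
    moreover have "(k + 1) mod length (cycle_nodes R) = k + 1"
      using 1 i by (simp add: k_eq length_cycle_nodes)
    moreover have "r = 0 \<or> r = 1 \<or> r = 2" using 1 by linarith
    ultimately show ?thesis using cur arcs by auto
  next
    case 2
    have "(k + 1) mod length (cycle_nodes R) = 4 * (Suc i mod length R) + 0"
      using 2 by (simp add: k_eq length_cycle_nodes mod_mult_mult1[symmetric])
    moreover have "Suc i mod length R < length R" by (rule mod_less_divisor) (use i in linarith)
    ultimately show ?thesis
      using cur arcs nth_cycle_nodes[of "Suc i mod length R" R 0] 2 by simp
  qed
qed

lemma cycle_has_pred:
  assumes arcs: "\<forall>k < length vs. (vs ! k, vs ! ((k + 1) mod length vs)) \<in> A" and v: "v \<in> set vs"
  shows "\<exists>u \<in> set vs. (u, v) \<in> A"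
proof -
  obtain j where j: "j < length vs" "vs ! j = v" using v by (auto simp: in_set_conv_nth)
  obtain k where "k < length vs" "(k + 1) mod length vs = j"
  proof (cases j)
    case 0
    then show ?thesis using that[of "length vs - 1"] j by simp
  next
    case (Suc k)
    then show ?thesis using that[of k] j by simp
  qed
  then show ?thesis using arcs j by (metis nth_mem)
qed

lemma subset_del_step_funpow:
  assumes "X \<subseteq> S" and pred: "\<And>v. v \<in> X \<Longrightarrow> \<exists>u\<in>X. (u, v) \<in> A"
  shows "X \<subseteq> (del_step A ^^ m) S"
proof (induction m)
  case (Suc m)
  then show ?case using pred by (fastforce simp: del_step_def)
qed (simp add: assms(1))

lemma rotationsI:
  assumes R: "R \<noteq> []" "distinct (concat (map (\<lambda>(a, c). [a, c]) R))"
    and f_arcs: "\<And>a c. (a, c) \<in> set R \<Longrightarrow> legal_fpair E b C x a c \<and> c \<in> UFminus E b C x"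
    and w_arcs: "\<And>i. i < length R \<Longrightarrow>
      essential_wpair E b C x (snd (R ! i)) (fst (R ! (Suc i mod length R)))"
  shows "R \<in> rotations E b C x"
proof -
  let ?A = "Darcs E b C x" and ?vs = "cycle_nodes R"
  have "(Wn a, Fn a) \<in> ?A \<and> (Fn a, Fn c) \<in> ?A \<and> (Fn c, Wn c) \<in> ?A" if "(a, c) \<in> set R" for a c
    using f_arcs[OF that] unfolding Darcs_def Dverts_def legal_fpair_def by blast
  moreover have "(Wn (snd (R ! i)), Wn (fst (R ! (Suc i mod length R)))) \<in> ?A"
    if "i < length R" for i
    using w_arcs[OF that]
    unfolding Darcs_def Dverts_def essential_wpair_def legal_wpair_def by blast
  ultimately have arcs: "\<forall>k < length ?vs. (?vs ! k, ?vs ! ((k + 1) mod length ?vs)) \<in> ?A"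
    by (blast intro: cycle_nodes_arcs)
  have "set ?vs \<subseteq> Dverts E b C x"
    using arcs unfolding Darcs_def by (auto simp: in_set_conv_nth)
  then have "set ?vs \<subseteq> remaining E b C x"
    unfolding remaining_def using cycle_has_pred[OF arcs] by (rule subset_del_step_funpow)
  then show ?thesis
    using R arcs distinct_cycle_nodes[OF R(2)] length_cycle_nodes[of R]
    unfolding rotations_def dir_cycle_def by auto
qed

lemma periodic_point:
  assumes "finite A" "a0 \<in> A" "\<And>a. a \<in> A \<Longrightarrow> \<phi> a \<in> A"
  obtains a where "a \<in> A" "a \<in> orbit \<phi> a"
proof -
  have iter: "(\<phi> ^^ k) a0 \<in> A" for k by (induction k) (simp_all add: assms)
  have "\<not> inj_on (\<lambda>k. (\<phi> ^^ k) a0) {..card A}"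
  proof
    assume "inj_on (\<lambda>k. (\<phi> ^^ k) a0) {..card A}"
    then have "card {..card A} \<le> card A" using iter assms(1) by (intro card_inj_on_le) auto
    then show False by simp
  qed
  then obtain i j where "i < j" "(\<phi> ^^ i) a0 = (\<phi> ^^ j) a0"
    unfolding inj_on_def by (metis linorder_neqE_nat)
  then have "(\<phi> ^^ (j - i)) ((\<phi> ^^ i) a0) = (\<phi> ^^ i) a0"
    by (metis funpow_add le_add_diff_inverse2 less_imp_le o_apply)
  then have "(\<phi> ^^ i) a0 \<in> orbit \<phi> ((\<phi> ^^ i) a0)"
    using \<open>i < j\<close> by (auto simp: orbit_altdef intro!: exI[of _ "j - i"])
  then show ?thesis using that iter by blast
qed

lemma cycle_in_finite_self_map:
  assumes "finite A" "a0 \<in> A" and closed: "\<And>a. a \<in> A \<Longrightarrow> \<phi> a \<in> A"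
  obtains as where "as \<noteq> []" "distinct as" "set as \<subseteq> A"
    "\<And>i. i < length as \<Longrightarrow> \<phi> (as ! i) = as ! (Suc i mod length as)"
proof -
  obtain a where a: "a \<in> A" "a \<in> orbit \<phi> a" using periodic_point assms by metis
  define n where "n = funpow_dist1 \<phi> a a"
  define as where "as = map (\<lambda>k. (\<phi> ^^ k) a) [0..<n]"
  have per: "(\<phi> ^^ n) a = a" unfolding n_def by (rule funpow_dist1_prop[OF a(2)])
  have iter: "(\<phi> ^^ k) a \<in> A" for k by (induction k) (simp_all add: a closed)
  have "0 < n" by (simp add: n_def)
  then have "as \<noteq> []" by (simp add: as_def)
  have "inj_on (\<lambda>k. (\<phi> ^^ k) a) {0..<n}" unfolding n_def by (rule inj_on_funpow_dist1[OF a(2)])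
  then have "distinct as" by (simp add: as_def distinct_map)
  have "set as \<subseteq> A" using iter by (auto simp: as_def)
  moreover have "\<phi> (as ! i) = as ! (Suc i mod length as)" if "i < length as" for i
    using that funpow_mod_eq[OF per, of "Suc i"] \<open>0 < n\<close> by (simp add: as_def)
  ultimately show ?thesis using that \<open>as \<noteq> []\<close> \<open>distinct as\<close> by blast
qed

section \<open>Two stable g-matchings\<close>

lemma restr_in: "e \<in> Ev E v \<Longrightarrow> restr E v z e = z e"
  by (simp add: restr_def)

lemma restr_out: "e \<notin> Ev E v \<Longrightarrow> restr E v z e = 0"
  by (simp add: restr_def)

lemma vnorm_restr: "vnorm E v (restr E v z) = sum z (Ev E v)"
  unfolding vnorm_def by (simp add: restr_in)

locale choice_setting =
  fixes W F :: "'v set" and E :: "('v \<times> 'v) set" and b :: "'v vec"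
    and C :: "'v \<Rightarrow> 'v vec \<Rightarrow> 'v vec"
  assumes setting: "setting W F E b C"
begin

lemma finite_E: "finite E"
  using setting finite_subset[of E "W \<times> F"] unfolding setting_def by auto

lemma finite_Ev: "finite (Ev E v)"
  using finite_E unfolding Ev_def by simp

lemma choice_at: "v \<in> W \<union> F \<Longrightarrow> choice_vertex E b C v"
  using setting unfolding setting_def by (simp add: choice_vertex.intro)

lemma edge_ends: "e \<in> E \<Longrightarrow> fst e \<in> W \<and> snd e \<in> F"
  using setting unfolding setting_def by auto

lemma Ev_W: "w \<in> W \<Longrightarrow> Ev E w = {e \<in> E. fst e = w}"
  using setting edge_ends unfolding setting_def Ev_def by blast

lemma Ev_F: "f \<in> F \<Longrightarrow> Ev E f = {e \<in> E. snd e = f}"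
  using setting edge_ends unfolding setting_def Ev_def by blast

lemma fst_in_Ev: "e \<in> E \<Longrightarrow> e \<in> Ev E (fst e)" and snd_in_Ev: "e \<in> E \<Longrightarrow> e \<in> Ev E (snd e)"
  by (simp_all add: Ev_def)

lemma sum_vnorm_W: "(\<Sum>w\<in>W. vnorm E w (restr E w z)) = sum z E"
proof -
  have "(\<Sum>w\<in>W. vnorm E w (restr E w z)) = (\<Sum>w\<in>W. sum z {e \<in> E. fst e = w})"
    unfolding vnorm_def by (intro sum.cong refl) (simp_all add: Ev_W restr_def)
  also have "\<dots> = sum z E"
    using finite_E setting edge_ends by (intro sum.group) (auto simp: setting_def)
  finally show ?thesis .
qed

lemma sum_vnorm_F: "(\<Sum>f\<in>F. vnorm E f (restr E f z)) = sum z E"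
proof -
  have "(\<Sum>f\<in>F. vnorm E f (restr E f z)) = (\<Sum>f\<in>F. sum z {e \<in> E. snd e = f})"
    unfolding vnorm_def by (intro sum.cong refl) (simp_all add: Ev_F restr_def)
  also have "\<dots> = sum z E"
    using finite_E setting edge_ends by (intro sum.group) (auto simp: setting_def)
  finally show ?thesis .
qed

context
  fixes z assumes stable: "stable W F E b C z"
begin

lemma stable_restr_Bv: "v \<in> W \<union> F \<Longrightarrow> restr E v z \<in> Bv E b v"
  using stable unfolding stable_def gmatching_def acceptable_def by blast

lemma stable_choice_restr: "v \<in> W \<union> F \<Longrightarrow> C v (restr E v z) = restr E v z"
  using stable unfolding stable_def gmatching_def acceptable_def by blast

lemma stable_outside_E: "e \<notin> E \<Longrightarrow> z e = 0"
  using stable unfolding stable_def gmatching_def by blast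

lemma stable_le_b: "z e \<le> b e"
  using stable stable_outside_E[of e] unfolding stable_def gmatching_def by (cases "e \<in> E") simp_all

lemma stable_not_blocking:
  "e \<in> E \<Longrightarrow> interesting E b C (fst e) (restr E (fst e) z) e
    \<Longrightarrow> \<not> interesting E b C (snd e) (restr E (snd e) z) e"
  using stable unfolding stable_def blocks_def by blast

end

end

locale stable_pair = choice_setting +
  fixes x y :: "'v vec"
  assumes stable_x: "stable W F E b C x" and stable_y: "stable W F E b C y"
    and x_precF_y: "precF F E b C x y"
begin

abbreviation xv :: "'v \<Rightarrow> 'v vec" where "xv v \<equiv> restr E v x"
abbreviation yv :: "'v \<Rightarrow> 'v vec" where "yv v \<equiv> restr E v y"
abbreviation Up where "Up \<equiv> UFplus E b C x"
abbreviation Um where "Um \<equiv> UFminus E b C x"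

lemma xv_Bv: "v \<in> W \<union> F \<Longrightarrow> xv v \<in> Bv E b v"
  by (rule stable_restr_Bv[OF stable_x])

lemma yv_Bv: "v \<in> W \<union> F \<Longrightarrow> yv v \<in> Bv E b v"
  by (rule stable_restr_Bv[OF stable_y])

lemma choice_xv: "v \<in> W \<union> F \<Longrightarrow> C v (xv v) = xv v"
  by (rule stable_choice_restr[OF stable_x])

lemma choice_yv: "v \<in> W \<union> F \<Longrightarrow> C v (yv v) = yv v"
  by (rule stable_choice_restr[OF stable_y])

lemma choice_sup_yv_xv:
  assumes f: "f \<in> F"
  shows "C f (sup (yv f) (xv f)) = yv f"
proof -
  have "prefers_eq E b C f (xv f) (yv f)" using x_precF_y f unfolding precF_def by blast
  then consider "xv f = yv f" | "C f (sup (yv f) (xv f)) = yv f"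
    unfolding prefers_eq_def prefers_def by blast
  then show ?thesis by cases (simp_all add: choice_yv f)
qed

lemma Up_iff: "a \<in> Up \<longleftrightarrow> a \<in> E \<and> interesting E b C (snd a) (xv (snd a)) a"
  by (simp add: UFplus_def)

lemma Um_iff: "c \<in> Um \<longleftrightarrow> c \<in> E \<and> 0 < x c \<and> \<not> interesting E b C (snd c) (xv (snd c)) c"
  by (simp add: UFminus_def)

lemma Up_Um_disjoint: "a \<in> Up \<Longrightarrow> a \<notin> Um"
  by (simp add: Up_iff Um_iff)

lemma Up_room:
  assumes "a \<in> Up" shows "x a < b a"
proof -
  have "a \<in> E" "interesting E b C (snd a) (xv (snd a)) a" using assms by (simp_all add: Up_iff)
  then show ?thesis using interesting_room restr_in[OF snd_in_Ev] by metis
qed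

lemma Up_not_interesting_at_w: "a \<in> Up \<Longrightarrow> \<not> interesting E b C (fst a) (xv (fst a)) a"
  using stable_not_blocking[OF stable_x] Up_iff by blast

lemma Up_if_less:
  assumes e: "e \<in> E" and less: "x e < y e"
  shows "e \<in> Up"
proof -
  define f where "f = snd e"
  have f: "f \<in> W \<union> F" and ef: "e \<in> Ev E f"
    using edge_ends[OF e] snd_in_Ev[OF e] by (simp_all add: f_def)
  interpret choice_vertex E b C f using choice_at[OF f] .
  have "interesting E b C f (xv f) e"
  proof (rule interesting_if_chosen_above[OF xv_Bv[OF f] Bv_sup[OF yv_Bv[OF f] xv_Bv[OF f]]])
    show "xv f \<le> sup (yv f) (xv f)" by simp
    show "xv f e < C f (sup (yv f) (xv f)) e"
      using choice_sup_yv_xv edge_ends[OF e] less ef by (simp add: f_def restr_in)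
  qed fact
  then show ?thesis using e by (simp add: Up_iff f_def)
qed

definition raised :: "'v \<Rightarrow> 'v vec" where
  "raised w = (\<lambda>e. if e \<in> Up \<inter> Ev E w then b e else xv w e)"

lemma raised_Bv: "w \<in> W \<Longrightarrow> raised w \<in> Bv E b w"
  using xv_Bv[of w] unfolding raised_def Bv_def by auto

lemma xv_le_raised: "xv w \<le> raised w"
  using stable_le_b[OF stable_x] by (simp add: raised_def le_fun_def restr_def)

lemma yv_le_raised: "w \<in> W \<Longrightarrow> yv w \<le> raised w"
proof (rule le_funI)
  fix e
  show "yv w e \<le> raised w e"
  proof (cases "e \<in> Ev E w")
    case True
    then have "e \<in> E" by (simp add: Ev_def)
    then show ?thesis
      using True Up_if_less[of e] stable_le_b[OF stable_y, of e]
      by (cases "x e < y e") (auto simp: raised_def restr_in)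
  qed (simp add: restr_out)
qed

lemma choice_raised:
  assumes w: "w \<in> W"
  shows "C w (raised w) = xv w"
proof -
  have wv: "w \<in> W \<union> F" using w by simp
  interpret choice_vertex E b C w using choice_at[OF wv] .
  have "C w (raised w) \<le> xv w"
  proof (rule le_funI, rule ccontr)
    fix e
    assume "\<not> C w (raised w) e \<le> xv w e"
    then have more: "xv w e < C w (raised w) e" by simp
    then have e: "e \<in> Ev E w"
      using Bv_zero[OF choice_in_Bv[OF raised_Bv[OF w]]] by fastforce
    have "interesting E b C w (xv w) e"
      by (rule interesting_if_chosen_above[OF xv_Bv[OF wv] raised_Bv[OF w] xv_le_raised e more])
    moreover have "e \<in> Up"
      using more le_funD[OF choice_le[OF raised_Bv[OF w]], of e]
      by (auto simp: raised_def split: if_splits)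
    ultimately show False using Up_not_interesting_at_w[of e] Ev_W[OF w] e by auto
  qed
  then have "C w (xv w) = C w (raised w)"
    by (rule choice_consistent[OF raised_Bv[OF w] xv_Bv[OF wv] xv_le_raised])
  then show ?thesis using choice_xv[OF wv] by simp
qed

lemma vnorm_xv_eq_yv:
  assumes v: "v \<in> W \<union> F"
  shows "vnorm E v (xv v) = vnorm E v (yv v)"
proof -
  have F_le: "vnorm E f (xv f) \<le> vnorm E f (yv f)" if f: "f \<in> F" for f
  proof -
    have fv: "f \<in> W \<union> F" using f by simp
    have "vnorm E f (C f (xv f)) \<le> vnorm E f (C f (sup (yv f) (xv f)))"
      by (rule choice_vertex.choice_size_mono[OF choice_at[OF fv]
            Bv_sup[OF yv_Bv[OF fv] xv_Bv[OF fv]] xv_Bv[OF fv]]) simp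
    then show ?thesis using choice_xv[OF fv] choice_sup_yv_xv[OF f] by simp
  qed
  have W_le: "vnorm E w (yv w) \<le> vnorm E w (xv w)" if w: "w \<in> W" for w
  proof -
    have wv: "w \<in> W \<union> F" using w by simp
    have "vnorm E w (C w (yv w)) \<le> vnorm E w (C w (raised w))"
      by (rule choice_vertex.choice_size_mono[OF choice_at[OF wv]
            raised_Bv[OF w] yv_Bv[OF wv] yv_le_raised[OF w]])
    then show ?thesis using choice_yv[OF wv] choice_raised[OF w] by simp
  qed
  have "(\<Sum>f\<in>F. vnorm E f (xv f)) \<le> (\<Sum>f\<in>F. vnorm E f (yv f))" by (rule sum_mono) (rule F_le)
  moreover have "(\<Sum>w\<in>W. vnorm E w (yv w)) \<le> (\<Sum>w\<in>W. vnorm E w (xv w))" by (rule sum_mono) (rule W_le)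
  ultimately have sum_F: "(\<Sum>f\<in>F. vnorm E f (xv f)) = (\<Sum>f\<in>F. vnorm E f (yv f))"
    and sum_W: "(\<Sum>w\<in>W. vnorm E w (yv w)) = (\<Sum>w\<in>W. vnorm E w (xv w))"
    using sum_vnorm_F[of x] sum_vnorm_F[of y] sum_vnorm_W[of x] sum_vnorm_W[of y] by linarith+
  have "finite W" "finite F" using setting by (simp_all add: setting_def)
  from v show ?thesis
  proof
    assume "v \<in> W"
    then show ?thesis using sum_mono_inv[OF sum_W W_le _ \<open>finite W\<close>] by simp
  next
    assume "v \<in> F"
    then show ?thesis using sum_mono_inv[OF sum_F F_le _ \<open>finite F\<close>] by simp
  qed
qed

section \<open>Legal f-pairs and essential w-pairs\<close>

definition raise_within_y :: "'v \<times> 'v \<Rightarrow> bool" where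
  "raise_within_y a \<longleftrightarrow> x a < y a \<or> \<not> interesting E b C (snd a) (yv (snd a)) a"

lemma choice_sup_yv_raise:
  assumes f: "f \<in> F" and u: "u \<in> Bv E b f" "xv f \<le> u" "\<And>e. u e \<le> xv f e + 1"
    and within: "\<And>e. xv f e < u e \<Longrightarrow> raise_within_y e"
  shows "C f (sup (yv f) u) = yv f"
proof -
  have fv: "f \<in> W \<union> F" using f by simp
  interpret choice_vertex E b C f using choice_at[OF fv] .
  let ?M = "sup (yv f) (xv f)" and ?T = "sup (yv f) u"
  have M: "?M \<in> Bv E b f" by (rule Bv_sup[OF yv_Bv[OF fv] xv_Bv[OF fv]])
  have T: "?T \<in> Bv E b f" by (rule Bv_sup[OF yv_Bv[OF fv] u(1)])
  have MT: "?M \<le> ?T" using u(2) by (simp add: le_supI2)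
  have "C f ?T \<le> yv f"
  proof (rule le_funI)
    fix e
    have CT: "C f ?T e \<le> ?T e" using le_funD[OF choice_le[OF T]] .
    show "C f ?T e \<le> yv f e"
    proof (cases "xv f e < u e")
      case True
      then have e: "e \<in> Ev E f" using Bv_zero[OF u(1)] by fastforce
      then have "snd e = f" using Ev_F[OF f] by simp
      from within[OF True] consider "x e < y e" | "\<not> interesting E b C f (yv f) e"
        unfolding raise_within_y_def using \<open>snd e = f\<close> by blast
      then show ?thesis
      proof cases
        case 1
        then have "?T e = yv f e" using u(3)[of e] e by (simp add: restr_in sup_nat_def)
        then show ?thesis using CT by simp
      next
        case 2
        then show ?thesis
          using interesting_if_chosen_above[OF yv_Bv[OF fv] T _ e] by (meson not_le sup_ge1)
      qed
    next
      case False
      then have "?T e = ?M e" using le_funD[OF u(2), of e] by (simp add: sup_nat_def)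
      moreover have "min (C f ?T e) (?M e) \<le> C f ?M e" by (rule choice_substitutable[OF T M MT])
      ultimately show ?thesis using CT choice_sup_yv_xv[OF f] by simp
    qed
  qed
  then have "C f (yv f) = C f ?T" by (rule choice_consistent[OF T yv_Bv[OF fv] sup_ge1])
  then show ?thesis using choice_yv[OF fv] by simp
qed

definition f_offer :: "'v \<times> 'v \<Rightarrow> 'v vec" where
  "f_offer a = (xv (snd a))(a := x a + 1)"

definition rejects :: "'v \<times> 'v \<Rightarrow> 'v \<times> 'v \<Rightarrow> bool" where
  "rejects a c \<longleftrightarrow> c \<in> Ev E (snd a) \<and> c \<noteq> a \<and> 0 < x c \<and> y c < x c \<and>
     C (snd a) (f_offer a) = (f_offer a)(c := x c - 1)"

lemma f_offer_Bv:
  assumes a: "a \<in> Up" shows "f_offer a \<in> Bv E b (snd a)"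
proof -
  have "a \<in> E" using a by (simp add: Up_iff)
  then show ?thesis
    unfolding f_offer_def using Up_room[OF a] edge_ends
    by (intro Bv_upd[OF xv_Bv snd_in_Ev]) simp_all
qed

lemma xv_le_f_offer: "a \<in> Up \<Longrightarrow> xv (snd a) \<le> f_offer a"
  unfolding f_offer_def by (intro le_funI) (simp add: Up_iff restr_in snd_in_Ev)

lemma choice_sup_yv_f_offer:
  assumes a: "a \<in> Up" "raise_within_y a"
  shows "C (snd a) (sup (yv (snd a)) (f_offer a)) = yv (snd a)"
proof (rule choice_sup_yv_raise)
  have "a \<in> E" using a(1) by (simp add: Up_iff)
  then show "snd a \<in> F" using edge_ends by blast
  have xa: "xv (snd a) a = x a" by (rule restr_in[OF snd_in_Ev[OF \<open>a \<in> E\<close>]])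
  show "f_offer a \<in> Bv E b (snd a)" "xv (snd a) \<le> f_offer a"
    using f_offer_Bv[OF a(1)] xv_le_f_offer[OF a(1)] .
  show "f_offer a e \<le> xv (snd a) e + 1" for e using xa by (simp add: f_offer_def)
  show "raise_within_y e" if "xv (snd a) e < f_offer a e" for e
    using that a(2) by (cases "e = a") (simp_all add: f_offer_def)
qed

lemma choice_f_offer:
  assumes a: "a \<in> Up" "raise_within_y a"
  obtains c where "c \<in> Ev E (snd a)" "c \<noteq> a" "0 < x c"
    "C (snd a) (f_offer a) = (f_offer a)(c := x c - 1)"
proof -
  define f where "f = snd a"
  define h where "h = f_offer a"
  define g where "g = C f h"
  have aE: "a \<in> E" using a Up_iff by blast
  have f: "f \<in> F" and fv: "f \<in> W \<union> F" using edge_ends[OF aE] by (simp_all add: f_def)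
  interpret choice_vertex E b C f using choice_at[OF fv] .
  have aEv: "a \<in> Ev E f" using snd_in_Ev[OF aE] by (simp add: f_def)
  have xa: "xv f a = x a" using aEv by (rule restr_in)
  have h: "h \<in> Bv E b f" and xh: "xv f \<le> h"
    using f_offer_Bv[OF a(1)] xv_le_f_offer[OF a(1)] by (simp_all add: h_def f_def)
  have g: "g \<in> Bv E b f" and gh: "g \<le> h" unfolding g_def using choice_in_Bv[OF h] choice_le[OF h] .
  \<comment> \<open>size monotonicity squeezes |g| between |x_f| and |y_f| = |x_f| = |h| - 1\<close>
  have "vnorm E f (xv f) \<le> vnorm E f g"
    using choice_size_mono[OF h xv_Bv[OF fv] xh] choice_xv[OF fv] by (simp add: g_def)
  moreover have "vnorm E f g \<le> vnorm E f (xv f)"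
    using choice_size_mono[OF Bv_sup[OF yv_Bv[OF fv] h] h sup_ge2] choice_sup_yv_f_offer[OF a]
      vnorm_xv_eq_yv[OF fv] by (simp add: g_def h_def f_def)
  moreover have "vnorm E f h = vnorm E f (xv f) + 1"
    using vnorm_upd_Suc[OF finite_Ev aEv, of "xv f"] xa by (simp add: h_def f_offer_def f_def)
  ultimately have "vnorm E f h = vnorm E f g + 1" by linarith
  then obtain c where c: "c \<in> Ev E f" and hg: "h = g(c := g c + 1)"
    by (rule upd_Suc_if_vnorm_Suc[OF finite_Ev g h gh])
  have "interesting E b C f (xv f) a" using a(1) by (simp add: Up_iff f_def)
  then have "C f ((xv f)(a := xv f a + 1)) a = xv f a + 1"
    by (rule interesting_bump[OF xv_Bv[OF fv]])
  then have "g a = x a + 1" using xa by (simp add: g_def h_def f_offer_def f_def)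
  then have ca: "c \<noteq> a" using fun_cong[OF hg, of a] by (auto simp: h_def f_offer_def)
  have "h c = x c" using ca c by (simp add: h_def f_offer_def f_def[symmetric] restr_in)
  then have gc: "g c = x c - 1" and xc: "0 < x c" using fun_cong[OF hg, of c] by simp_all
  have "C f h = h(c := x c - 1)"
  proof
    fix e
    show "C f h e = (h(c := x c - 1)) e" using fun_cong[OF hg, of e] gc by (simp add: g_def)
  qed
  then show ?thesis using that c ca xc by (simp add: f_def h_def)
qed

lemma rejects_exists:
  assumes a: "a \<in> Up" "raise_within_y a"
  shows "\<exists>c. rejects a c"
proof -
  obtain c where c: "c \<in> Ev E (snd a)" "c \<noteq> a" "0 < x c"
    and Ch: "C (snd a) (f_offer a) = (f_offer a)(c := x c - 1)"
    by (rule choice_f_offer[OF a])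
  have aE: "a \<in> E" using a(1) by (simp add: Up_iff)
  then have fv: "snd a \<in> W \<union> F" using edge_ends by blast
  have "min (C (snd a) (sup (yv (snd a)) (f_offer a)) c) (f_offer a c) \<le> C (snd a) (f_offer a) c"
    by (rule choice_vertex.choice_substitutable[OF choice_at[OF fv]
          Bv_sup[OF yv_Bv[OF fv] f_offer_Bv[OF a(1)]] f_offer_Bv[OF a(1)] sup_ge2])
  moreover have "f_offer a c = x c" using c by (simp add: f_offer_def restr_in)
  ultimately have "y c < x c" using choice_sup_yv_f_offer[OF a] Ch c by (simp add: restr_in)
  then show ?thesis using c Ch unfolding rejects_def by blast
qed

lemma rejects_legal_fpair:
  assumes a: "a \<in> Up" and rej: "rejects a c"
  shows "legal_fpair E b C x a c" "c \<in> Um"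
proof -
  define f where "f = snd a"
  have aE: "a \<in> E" using a Up_iff by blast
  have f: "f \<in> F" and fv: "f \<in> W \<union> F" using edge_ends[OF aE] by (simp_all add: f_def)
  have c: "c \<in> Ev E f" "c \<noteq> a" "0 < x c" and Ch: "C f (f_offer a) = (f_offer a)(c := x c - 1)"
    using rej by (simp_all add: rejects_def f_def)
  have xa: "xv f a = x a" using snd_in_Ev[OF aE] by (simp add: restr_in f_def)
  have xc: "xv f c = x c" using c(1) by (rule restr_in)
  have offer: "(\<lambda>e. xv f e + unitv a e) = f_offer a"
    using xa by (auto simp: f_offer_def unitv_def f_def)
  have "(\<lambda>e. C f (\<lambda>e'. xv f e' + unitv a e') e + unitv c e) = (\<lambda>e. xv f e + unitv a e)"
    unfolding offer Ch using c xc by (auto simp: unitv_def f_offer_def f_def)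
  then show "legal_fpair E b C x a c" unfolding legal_fpair_def using a c by (simp add: f_def)
  have "\<not> interesting E b C f (xv f) c"
  proof (rule choice_vertex.rejected_not_interesting[OF choice_at[OF fv] finite_Ev xv_Bv[OF fv]])
    show "a \<in> Ev E f" "xv f a < b a"
      using snd_in_Ev[OF aE] Up_room[OF a] xa by (simp_all add: f_def)
    show "C f ((xv f)(a := xv f a + 1)) = ((xv f)(a := xv f a + 1))(c := xv f c - 1)"
      using Ch xa xc by (simp add: f_offer_def f_def)
  qed (use c xc in auto)
  moreover have "snd c = f" using c(1) Ev_F[OF f] by simp
  ultimately show "c \<in> Um" using c Ev_F[OF f] by (simp add: Um_iff)
qed

definition w_offer :: "'v \<times> 'v \<Rightarrow> 'v vec" where
  "w_offer c = (raised (fst c))(c := x c - 1)"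

context
  fixes c assumes c: "c \<in> Um" "y c < x c"
begin

lemma c_at_w: "fst c \<in> W" "c \<in> Ev E (fst c)" "c \<notin> Up" "0 < x c"
proof -
  have "c \<in> E" "0 < x c" using c(1) by (simp_all add: Um_iff)
  then show "fst c \<in> W" "c \<in> Ev E (fst c)" "0 < x c" using edge_ends fst_in_Ev by blast+
  show "c \<notin> Up" using Up_Um_disjoint c(1) by blast
qed

lemma w_offer_le_raised: "w_offer c \<le> raised (fst c)"
proof (rule le_funI)
  fix e
  have "raised (fst c) c = x c" using c_at_w by (simp add: raised_def restr_in)
  then show "w_offer c e \<le> raised (fst c) e" by (cases "e = c") (simp_all add: w_offer_def)
qed

lemma w_offer_Bv: "w_offer c \<in> Bv E b (fst c)"
  by (rule Bv_mono[OF raised_Bv[OF c_at_w(1)] w_offer_le_raised])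

lemma yv_le_w_offer: "yv (fst c) \<le> w_offer c"
  using le_funD[OF yv_le_raised[OF c_at_w(1)]] c(2) c_at_w(2)
  by (intro le_funI) (auto simp: w_offer_def restr_in)

lemma xv_minus_le_choice_w_offer: "(xv (fst c))(c := x c - 1) \<le> C (fst c) (w_offer c)"
proof -
  interpret choice_vertex E b C "fst c" using choice_at c_at_w(1) by blast
  have "((xv (fst c))(c := x c - 1)) e = min (xv (fst c) e) (w_offer c e)" for e
    using le_funD[OF xv_le_raised, of "fst c" e] c_at_w(2,3)
    by (cases "e = c") (auto simp: w_offer_def raised_def restr_in)
  then show ?thesis
    using choice_substitutable[OF raised_Bv[OF c_at_w(1)] w_offer_Bv w_offer_le_raised]
      choice_raised[OF c_at_w(1)]
    by (intro le_funI) simp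
qed

lemma vnorm_choice_w_offer: "vnorm E (fst c) (C (fst c) (w_offer c)) = vnorm E (fst c) (xv (fst c))"
proof -
  have wv: "fst c \<in> W \<union> F" using c_at_w(1) by simp
  interpret choice_vertex E b C "fst c" using choice_at[OF wv] .
  have "vnorm E (fst c) (yv (fst c)) \<le> vnorm E (fst c) (C (fst c) (w_offer c))"
    using choice_size_mono[OF w_offer_Bv yv_Bv[OF wv] yv_le_w_offer] choice_yv[OF wv] by simp
  moreover have "vnorm E (fst c) (C (fst c) (w_offer c)) \<le> vnorm E (fst c) (xv (fst c))"
    using choice_size_mono[OF raised_Bv[OF c_at_w(1)] w_offer_Bv w_offer_le_raised]
      choice_raised[OF c_at_w(1)] by simp
  ultimately show ?thesis using vnorm_xv_eq_yv[OF wv] by linarith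
qed

lemma choice_w_offer:
  obtains a where "a \<in> Up" "a \<in> Ev E (fst c)" "a \<noteq> c"
    "C (fst c) (w_offer c) = ((xv (fst c))(c := x c - 1))(a := x a + 1)"
proof -
  define w where "w = fst c"
  define zc where "zc = (xv w)(c := x c - 1)"
  define g where "g = C w (w_offer c)"
  have wv: "w \<in> W \<union> F" using c_at_w(1) by (simp add: w_def)
  interpret choice_vertex E b C w using choice_at[OF wv] .
  have z: "w_offer c \<in> Bv E b w" using w_offer_Bv by (simp add: w_def)
  have g: "g \<in> Bv E b w" and gz: "g \<le> w_offer c"
    unfolding g_def using choice_in_Bv[OF z] choice_le[OF z] .
  have zc_g: "zc \<le> g" using xv_minus_le_choice_w_offer by (simp add: zc_def g_def w_def)
  have "xv w = zc(c := zc c + 1)" using c_at_w by (auto simp: zc_def restr_in w_def)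
  then have "vnorm E w g = vnorm E w zc + 1"
    using vnorm_upd_Suc[OF finite_Ev c_at_w(2), of zc] vnorm_choice_w_offer
    by (simp add: g_def w_def)
  then obtain a where a: "a \<in> Ev E w" and ga: "g = zc(a := zc a + 1)"
    by (rule upd_Suc_if_vnorm_Suc[OF finite_Ev Bv_mono[OF g zc_g] g zc_g])
  have aU: "a \<in> Up"
  proof (rule ccontr)
    assume "a \<notin> Up"
    then have "w_offer c a = zc a"
      by (cases "a = c") (simp_all add: w_offer_def zc_def raised_def w_def)
    then show False using le_funD[OF gz, of a] ga by simp
  qed
  then have "a \<noteq> c" using c_at_w(3) by blast
  then have "zc a = x a" using a by (simp add: zc_def restr_in)
  then show ?thesis using that aU a \<open>a \<noteq> c\<close> ga by (simp add: g_def zc_def w_def)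
qed

lemma not_interesting_at_f_if_chosen_at_w:
  assumes a: "a \<in> Ev E (fst c)" and more: "y a < C (fst c) (w_offer c) a"
  shows "\<not> interesting E b C (snd a) (yv (snd a)) a"
proof -
  define w where "w = fst c"
  have w: "w \<in> W" and wv: "w \<in> W \<union> F" and aw: "a \<in> Ev E w"
    using c_at_w(1) a by (simp_all add: w_def)
  interpret choice_vertex E b C w using choice_at[OF wv] .
  let ?z = "w_offer c" and ?u = "sup (yv w) (C w (w_offer c))"
  have z: "?z \<in> Bv E b w" using w_offer_Bv by (simp add: w_def)
  have uz: "?u \<le> ?z" using yv_le_w_offer choice_le[OF z] by (simp add: w_def)
  have u: "?u \<in> Bv E b w" using Bv_mono[OF z uz] .
  have "C w ?u = C w ?z" using choice_consistent[OF z u uz] by simp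
  then have "yv w a < C w ?u a" using more aw by (simp add: restr_in w_def)
  then have "interesting E b C w (yv w) a"
    by (rule interesting_if_chosen_above[OF yv_Bv[OF wv] u sup_ge1 aw])
  moreover have "a \<in> E" "fst a = w" using aw Ev_W[OF w] by simp_all
  ultimately show ?thesis using stable_not_blocking[OF stable_y] by blast
qed

lemma essential_wpair_exists: "\<exists>a. essential_wpair E b C x c a \<and> a \<in> Up \<and> raise_within_y a"
proof -
  define w where "w = fst c"
  define g where "g = C w (w_offer c)"
  obtain a where aU: "a \<in> Up" and a: "a \<in> Ev E w" "a \<noteq> c"
    and ga: "g = ((xv w)(c := x c - 1))(a := x a + 1)"
    using choice_w_offer unfolding w_def g_def by blast
  have w: "w \<in> W" and wv: "w \<in> W \<union> F" using c_at_w(1) by (simp_all add: w_def)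
  interpret choice_vertex E b C w using choice_at[OF wv] .
  have fa: "fst a = w" using a(1) Ev_W[OF w] by simp
  have z: "w_offer c \<in> Bv E b w" using w_offer_Bv by (simp add: w_def)
  have g_unit: "g = (\<lambda>e. xv w e + unitv a e - unitv c e)"
  proof
    fix e
    show "g e = xv w e + unitv a e - unitv c e"
      using a restr_in[OF a(1), of x] restr_in[OF c_at_w(2), of x]
      by (cases "e = a"; cases "e = c") (simp_all add: ga fa unitv_def w_def)
  qed
  have legal: "legal_wpair E b C x c a"
    unfolding legal_wpair_def acceptable_def fa g_unit[symmetric]
    using c(1) aU fa choice_in_Bv[OF z] choice_idem[OF z] by (simp add: g_def w_def)
  have "\<not> interesting E b C w g d" if d: "d \<in> Up \<inter> Ev E w" for d
  proof -
    have "w_offer c d = b d" using d c_at_w(3) by (auto simp: w_offer_def raised_def w_def)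
    then show ?thesis using not_interesting_at_capacity[OF z] by (simp add: g_def)
  qed
  then have "essential_wpair E b C x c a"
    using legal unfolding essential_wpair_def fa g_unit[symmetric] by blast
  moreover have "y a < C w (w_offer c) a" if "\<not> x a < y a"
    using that a by (simp add: g_def[symmetric] ga restr_in)
  then have "raise_within_y a"
    using not_interesting_at_f_if_chosen_at_w a(1) unfolding raise_within_y_def w_def by blast
  ultimately show ?thesis using aU by blast
qed

end

section \<open>The rotation\<close>

definition candidates :: "('v \<times> 'v) set" where
  "candidates = {a \<in> Up. raise_within_y a}"

definition rejected :: "'v \<times> 'v \<Rightarrow> 'v \<times> 'v" where
  "rejected a = (SOME c. rejects a c)"

definition accepted :: "'v \<times> 'v \<Rightarrow> 'v \<times> 'v" where
  "accepted c = (SOME a. essential_wpair E b C x c a \<and> a \<in> candidates)"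

definition next_candidate :: "'v \<times> 'v \<Rightarrow> 'v \<times> 'v" where
  "next_candidate a = accepted (rejected a)"

lemma rejects_rejected: "a \<in> candidates \<Longrightarrow> rejects a (rejected a)"
  unfolding rejected_def candidates_def using rejects_exists by (blast intro: someI_ex)

lemma rejected_in_Um: "a \<in> candidates \<Longrightarrow> rejected a \<in> Um"
  using rejects_legal_fpair rejects_rejected candidates_def by blast

lemma next_candidate:
  assumes "a \<in> candidates"
  shows "essential_wpair E b C x (rejected a) (next_candidate a)" "next_candidate a \<in> candidates"
proof -
  have "rejected a \<in> Um" "y (rejected a) < x (rejected a)"
    using rejected_in_Um rejects_rejected assms by (simp_all add: rejects_def)
  then have "\<exists>a'. essential_wpair E b C x (rejected a) a' \<and> a' \<in> candidates"
    using essential_wpair_exists unfolding candidates_def by blast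
  then show "essential_wpair E b C x (rejected a) (next_candidate a)"
    and "next_candidate a \<in> candidates"
    unfolding next_candidate_def accepted_def by (metis (mono_tags, lifting) someI_ex)+
qed

lemma candidates_nonempty: "\<exists>a. a \<in> candidates"
proof -
  obtain e where "x e \<noteq> y e" using x_precF_y unfolding precF_def by (meson ext)
  moreover have "e \<in> E"
    using calculation stable_outside_E[OF stable_x] stable_outside_E[OF stable_y] by metis
  ultimately have f: "snd e \<in> F" and e: "e \<in> Ev E (snd e)" "x e \<noteq> y e"
    using edge_ends snd_in_Ev by blast+
  have "\<exists>e' \<in> Ev E (snd e). x e' < y e'"
  proof (rule ccontr)
    assume "\<not> ?thesis"
    then have "yv (snd e) e' \<le> xv (snd e) e'" if "e' \<in> Ev E (snd e)" for e'
      using that by (auto simp: restr_in not_less)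
    moreover have "sum (yv (snd e)) (Ev E (snd e)) = sum (xv (snd e)) (Ev E (snd e))"
      using vnorm_xv_eq_yv[of "snd e"] f by (simp add: vnorm_def)
    ultimately have "yv (snd e) e = xv (snd e) e" using sum_mono_inv[OF _ _ e(1) finite_Ev] by blast
    then show False using e by (simp add: restr_in)
  qed
  then obtain e' where "e' \<in> E" "x e' < y e'" by (auto simp: Ev_def)
  then have "e' \<in> candidates" using Up_if_less by (simp add: candidates_def raise_within_y_def)
  then show ?thesis ..
qed

lemma finite_candidates: "finite candidates"
  using finite_E by (rule rev_finite_subset) (auto simp: candidates_def Up_iff)

lemma candidate_cycle:
  obtains as where "as \<noteq> []" "distinct as" "set as \<subseteq> candidates"
    "\<And>i. i < length as \<Longrightarrow> next_candidate (as ! i) = as ! (Suc i mod length as)"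
proof -
  obtain a0 where "a0 \<in> candidates" using candidates_nonempty ..
  show ?thesis
    using cycle_in_finite_self_map[where \<phi> = next_candidate, OF finite_candidates \<open>a0 \<in> candidates\<close>]
      next_candidate(2) that by blast
qed

context
  fixes as assumes as: "distinct as" "set as \<subseteq> candidates"
    "\<And>i. i < length as \<Longrightarrow> next_candidate (as ! i) = as ! (Suc i mod length as)"
begin

lemma inj_on_rejected_cycle: "inj_on rejected (set as)"
proof (rule inj_onI)
  fix a a' assume "a \<in> set as" "a' \<in> set as" and rej: "rejected a = rejected a'"
  then obtain i j where ij: "i < length as" "j < length as" "a = as ! i" "a' = as ! j"
    by (auto simp: in_set_conv_nth)
  then have "as ! (Suc i mod length as) = as ! (Suc j mod length as)"
    using as(3) rej by (metis next_candidate_def)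
  moreover have "Suc k mod length as < length as" if "k < length as" for k
    using that by (intro mod_less_divisor) linarith
  ultimately have "Suc i mod length as = Suc j mod length as"
    using as(1) ij(1,2) nth_eq_iff_index_eq by metis
  then have "i = j"
    using ij(1,2) by (cases "Suc i = length as"; cases "Suc j = length as") auto
  then show "a = a'" using ij by simp
qed

lemma rotation_of_candidate_cycle:
  assumes "as \<noteq> []"
  shows "map (\<lambda>a. (a, rejected a)) as \<in> rotations E b C x"
proof (rule rotationsI)
  show "map (\<lambda>a. (a, rejected a)) as \<noteq> []" using assms by simp
  have "set as \<inter> rejected ` set as = {}"
    using as(2) rejected_in_Um Up_Um_disjoint unfolding candidates_def by blast
  then show "distinct (concat (map (\<lambda>(a, c). [a, c]) (map (\<lambda>a. (a, rejected a)) as)))"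
    using as(1) inj_on_rejected_cycle
    by (intro distinct_concat_pairs) (simp_all add: distinct_map image_image comp_def inj_on_def)
  show "legal_fpair E b C x a c \<and> c \<in> Um" if "(a, c) \<in> set (map (\<lambda>a. (a, rejected a)) as)" for a c
  proof -
    have a: "a \<in> candidates" and c: "c = rejected a" using that as(2) by auto
    then have "a \<in> Up" by (simp add: candidates_def)
    then show ?thesis using rejects_legal_fpair rejects_rejected[OF a] c by blast
  qed
  show "essential_wpair E b C x (snd (map (\<lambda>a. (a, rejected a)) as ! i))
      (fst (map (\<lambda>a. (a, rejected a)) as ! (Suc i mod length (map (\<lambda>a. (a, rejected a)) as))))"
    if "i < length (map (\<lambda>a. (a, rejected a)) as)" for i
  proof -
    have n: "i < length as" using that by simp
    then have a: "as ! i \<in> candidates" using as(2) nth_mem by blast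
    have "Suc i mod length as < length as"
      using n mod_less_divisor by (metis gr_zeroI not_less_zero)
    then show ?thesis using next_candidate(1)[OF a] as(3)[OF n] n by simp
  qed
qed

end

definition bumped :: "('v \<times> 'v) set \<Rightarrow> 'v vec" where
  "bumped A = (\<lambda>e. x e + of_bool (e \<in> A))"

(* Truncated subtraction is exact here: rejected edges carry x > 0, see int_rotated. *)
definition rotated :: "('v \<times> 'v) set \<Rightarrow> 'v vec" where
  "rotated A = (\<lambda>e. bumped A e - of_bool (e \<in> rejected ` A))"

context
  fixes A assumes A: "A \<subseteq> candidates"
begin

lemma rejected_notin: "e \<in> A \<Longrightarrow> e \<notin> rejected ` A"
  using A rejected_in_Um Up_Um_disjoint unfolding candidates_def by blast

lemma int_rotated:
  "int (rotated A e) = int (x e) + (if e \<in> A then 1 else if e \<in> rejected ` A then -1 else 0)"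
proof -
  have "e \<in> rejected ` A \<Longrightarrow> 0 < x e" using A rejected_in_Um Um_iff by blast
  then show ?thesis using rejected_notin[of e] by (auto simp: rotated_def bumped_def of_nat_diff)
qed

lemma rejected_at: "a \<in> A \<Longrightarrow> f \<in> F \<Longrightarrow> rejected a \<in> Ev E f \<longleftrightarrow> a \<in> Ev E f"
  using A rejects_rejected[of a] Ev_F[of f] Ev_F[of "snd a"] edge_ends
  unfolding rejects_def candidates_def Up_iff by auto

lemma bumped_at_f:
  assumes f: "f \<in> F"
  shows "restr E f (bumped A) \<in> Bv E b f" "xv f \<le> restr E f (bumped A)"
    "\<And>e. restr E f (bumped A) e \<le> xv f e + 1"
    "\<And>e. xv f e < restr E f (bumped A) e \<Longrightarrow> raise_within_y e"
proof -
  have "x e + of_bool (e \<in> A) \<le> b e" for e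
    using A Up_room[of e] stable_le_b[OF stable_x, of e]
    by (cases "e \<in> A") (auto simp: candidates_def)
  then show "restr E f (bumped A) \<in> Bv E b f" by (simp add: Bv_def restr_def bumped_def)
  show "xv f \<le> restr E f (bumped A)" "\<And>e. restr E f (bumped A) e \<le> xv f e + 1"
    by (auto simp: restr_def bumped_def le_fun_def)
  show "\<And>e. xv f e < restr E f (bumped A) e \<Longrightarrow> raise_within_y e"
    using A by (auto simp: restr_def bumped_def candidates_def split: if_splits)
qed

lemma vnorm_rotated:
  assumes inj: "inj_on rejected A" and f: "f \<in> F"
  shows "vnorm E f (restr E f (rotated A)) = vnorm E f (xv f)"
proof -
  have "rotated A e + of_bool (e \<in> rejected ` A) = x e + of_bool (e \<in> A)" for e
  proof -
    have "e \<in> rejected ` A \<Longrightarrow> 0 < x e" using A rejected_in_Um Um_iff by blast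
    then show ?thesis using rejected_notin[of e] by (auto simp: rotated_def bumped_def)
  qed
  then have "(\<Sum>e\<in>Ev E f. rotated A e + of_bool (e \<in> rejected ` A))
      = (\<Sum>e\<in>Ev E f. x e + of_bool (e \<in> A))"
    by simp
  then have "sum (rotated A) (Ev E f) + card (Ev E f \<inter> rejected ` A)
      = sum x (Ev E f) + card (Ev E f \<inter> A)"
    using finite_Ev by (simp add: sum.distrib)
  moreover have "Ev E f \<inter> rejected ` A = rejected ` (Ev E f \<inter> A)"
    using rejected_at f by blast
  then have "card (Ev E f \<inter> rejected ` A) = card (Ev E f \<inter> A)"
    using inj by (simp add: card_image inj_on_subset)
  ultimately show ?thesis by (simp add: vnorm_restr)
qed

lemma choice_bumped_at_rejected:
  assumes a: "a \<in> A" and f: "f \<in> F" and e: "rejected a \<in> Ev E f"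
  shows "C f (restr E f (bumped A)) (rejected a) < x (rejected a)"
proof -
  let ?c = "rejected a" and ?u = "restr E f (bumped A)"
  have fv: "f \<in> W \<union> F" using f by simp
  have rej: "rejects a ?c" using a A rejects_rejected by blast
  have af: "a \<in> Ev E f" using rejected_at[OF a f] e by simp
  then have snd: "snd a = f" using Ev_F[OF f] by simp
  have "f_offer a \<le> ?u"
    using a af by (intro le_funI) (simp add: f_offer_def snd restr_def bumped_def)
  then have "min (C f ?u ?c) (f_offer a ?c) \<le> C f (f_offer a) ?c"
    using choice_vertex.choice_substitutable[OF choice_at[OF fv] bumped_at_f(1)[OF f]]
      f_offer_Bv A a snd
    unfolding candidates_def by blast
  moreover have "C f (f_offer a) ?c = x ?c - 1" "?c \<noteq> a" "0 < x ?c"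
    using rej snd by (simp_all add: rejects_def)
  moreover have "f_offer a ?c = x ?c" using \<open>?c \<noteq> a\<close> e by (simp add: f_offer_def snd restr_in)
  ultimately show ?thesis by simp
qed

lemma choice_bumped:
  assumes inj: "inj_on rejected A" and f: "f \<in> F"
  shows "C f (restr E f (bumped A)) = restr E f (rotated A)"
proof -
  have fv: "f \<in> W \<union> F" using f by simp
  interpret choice_vertex E b C f using choice_at[OF fv] .
  let ?u = "restr E f (bumped A)" and ?s = "restr E f (rotated A)"
  have u: "?u \<in> Bv E b f" and xu: "xv f \<le> ?u" using bumped_at_f[OF f] by blast+
  have su: "?s \<le> ?u" by (rule le_funI) (simp add: restr_def rotated_def)
  have "C f ?u \<le> ?s"
  proof (rule le_funI)
    fix e
    have Cu: "C f ?u e \<le> ?u e" using le_funD[OF choice_le[OF u]] .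
    show "C f ?u e \<le> ?s e"
    proof (cases "e \<in> rejected ` A \<inter> Ev E f")
      case True
      then obtain a where a: "a \<in> A" "e = rejected a" and e: "e \<in> Ev E f" by blast
      have "C f ?u e < x e" using choice_bumped_at_rejected[OF a(1) f] a(2) e by simp
      then show ?thesis
        using rejected_notin[of e] a e by (simp add: restr_in rotated_def bumped_def)
    next
      case False
      then show ?thesis using Cu by (auto simp: restr_def rotated_def)
    qed
  qed
  moreover have "vnorm E f ?s \<le> vnorm E f (C f ?u)"
    using choice_size_mono[OF u xv_Bv[OF fv] xu] choice_xv[OF fv] vnorm_rotated[OF inj f] by simp
  ultimately show ?thesis
    by (rule Bv_eq_if_le_vnorm[OF finite_Ev choice_in_Bv[OF u] Bv_mono[OF u su]])
qed

lemma rotated_prefers_eq: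
  assumes inj: "inj_on rejected A" and f: "f \<in> F"
  shows "prefers_eq E b C f (restr E f (rotated A)) (yv f)"
proof -
  have fv: "f \<in> W \<union> F" using f by simp
  interpret choice_vertex E b C f using choice_at[OF fv] .
  let ?u = "restr E f (bumped A)" and ?s = "restr E f (rotated A)"
  have u: "?u \<in> Bv E b f" using bumped_at_f[OF f] by blast
  have Cu: "C f ?u = ?s" by (rule choice_bumped[OF inj f])
  have CT: "C f (sup (yv f) ?u) = yv f" using choice_sup_yv_raise[OF f] bumped_at_f[OF f] by blast
  have s: "?s \<in> Bv E b f" and su: "?s \<le> ?u"
    using choice_in_Bv[OF u] choice_le[OF u] by (simp_all add: Cu)
  have T: "sup (yv f) ?u \<in> Bv E b f" by (rule Bv_sup[OF yv_Bv[OF fv] u])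
  have "sup (yv f) ?s \<le> sup (yv f) ?u" using su by (simp add: sup.coboundedI2)
  then have "C f (sup (yv f) ?s) = yv f"
    using choice_consistent[OF T Bv_sup[OF yv_Bv[OF fv] s]] CT by simp
  moreover have "C f ?s = ?s" using choice_idem[OF u] by (simp add: Cu)
  ultimately show ?thesis
    using s yv_Bv[OF fv] choice_yv[OF fv]
    unfolding prefers_eq_def prefers_def acceptable_def by auto
qed

lemma rotated_preceqF: "inj_on rejected A \<Longrightarrow> preceqF F E b C (rotated A) y"
  using rotated_prefers_eq unfolding preceqF_def precF_def by blast

end

end

theorem proposition3p5:
  fixes W F :: "'v set" and E :: "('v \<times> 'v) set" and b x y :: "'v vec"
    and C :: "'v \<Rightarrow> 'v vec \<Rightarrow> 'v vec"
  assumes "setting W F E b C"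
    and "stable W F E b C x" and "stable W F E b C y"
    and "precF F E b C x y"
  shows "\<exists>R \<in> rotations E b C x. \<exists>x' :: 'v vec.
           (\<forall>e. int (x' e) = int (x e) + chi R e) \<and> preceqF F E b C x' y"
proof -
  interpret stable_pair W F E b C x y using assms by unfold_locales
  obtain as where as: "as \<noteq> []" "distinct as" "set as \<subseteq> candidates"
    "\<And>i. i < length as \<Longrightarrow> next_candidate (as ! i) = as ! (Suc i mod length as)"
    using candidate_cycle by blast
  let ?R = "map (\<lambda>a. (a, rejected a)) as"
  have inj: "inj_on rejected (set as)" using as(2-4) by (rule inj_on_rejected_cycle)
  have "?R \<in> rotations E b C x" using as(2-4) as(1) by (rule rotation_of_candidate_cycle)
  moreover have "int (rotated (set as) e) = int (x e) + chi ?R e" for e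
    using int_rotated[OF as(3)] by (simp add: chi_def image_image)
  moreover have "preceqF F E b C (rotated (set as)) y" using as(3) inj by (rule rotated_preceqF)
  ultimately show ?thesis by blast
qed

end
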